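(* Let $\mathcal{H}$ and $\mathcal{H}'$ be finite-dimensional Hilbert spaces, and let $\Phi:\mathcal{B}(\mathcal{H})\to\mathcal{B}(\mathcal{H}')$ be a quantum channel (a completely positive trace-preserving map). Let $\rho_{\text{in}}=\sum_{i=1}^{r}p_i|p_i\rangle\langle p_i|$ be a density matrix on $\mathcal{H}$ of rank $r$, where $\{|p_i\rangle\}_{i=1}^r$ are orthonormal, $0<p_i\leq 1$ and $\sum_{i=1}^r p_i=1$, and let $\rho_{\text{out}}=\Phi(\rho_{\text{in}})$. Define the information production $\Delta S\equiv S(\rho_{\text{out}})-S(\rho_{\text{in}})$ and the distribution $$\widetilde{P}(\sigma)\equiv\sum_{i=1}^{r}p_i\,\delta\big(\sigma-C(\Phi(|p_i\rangle\langle p_i|),\rho_{\text{out}})-\ln p_i\big),$$ i.e. $\sigma$ takes the value $\sigma_i=C(\Phi(|p_i\rangle\langle p_i|),\rho_{\text{out}})+\ln p_i$ with probability $p_i$, and write $\langle f(\sigma)\rangle_{\widetilde{P}}=\int d\sigma\,\widetilde{P}(\sigma)f(\sigma)=\sum_{i=1}^r p_i f(\sigma_i)$. Then $$\langle e^{-\sigma}\rangle_{\widetilde{P}}=\sum_{i=1}^{r}e^{-C(\Phi(|p_i\rangle\langle p_i|),\rho_{\text{out}})},$$ and consequently $\Delta S\geq L_{\text{otm}}$, where $$L_{\text{otm}}\equiv-\ln\Big(\sum_{i=1}^{r}e^{-C(\Phi(|p_i\rangle\langle p_i|),\rho_{\text{out}})}\Big).$$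
   Context: $\mathcal{B}(\mathcal{H})$ denotes the set of density matrices on $\mathcal{H}$. $S(\rho)\equiv-\mathrm{Tr}[\rho\ln\rho]$ is the von Neumann entropy. $C(\rho_1,\rho_2)\equiv-\mathrm{Tr}[\rho_1\ln\rho_2]$ is the quantum cross entropy of $\rho_1$ with respect to $\rho_2$; it is finite when $\mathrm{supp}(\rho_1)\subseteq\mathrm{supp}(\rho_2)$ (with $\ln\rho_2$ taken on the support of $\rho_2$) and equals $+\infty$ otherwise. Since $\rho_{\text{out}}=\sum_i p_i\Phi(|p_i\rangle\langle p_i|)$, each $C(\Phi(|p_i\rangle\langle p_i|),\rho_{\text{out}})$ is finite. *)

theory Defs
  imports Complex_Main "Jordan_Normal_Form.Matrix"
begin

text \<open>Finite-dimensional Hilbert spaces are modelled as C^n; operators on them as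
  n x n complex matrices (type complex mat with carrier_mat n n).\<close>

definition mtrace :: "complex mat \<Rightarrow> complex" where
  "mtrace A = (\<Sum>i<dim_row A. A $$ (i,i))"

definition adj :: "complex mat \<Rightarrow> complex mat" where
  "adj A = mat (dim_col A) (dim_row A) (\<lambda>(i,j). cnj (A $$ (j,i)))"

definition cinner :: "complex vec \<Rightarrow> complex vec \<Rightarrow> complex" where
  "cinner u w = (\<Sum>k<dim_vec u. cnj (u $ k) * w $ k)"

definition hermitian :: "nat \<Rightarrow> complex mat \<Rightarrow> bool" where
  "hermitian n A \<longleftrightarrow> A \<in> carrier_mat n n \<and> adj A = A"

definition psd :: "nat \<Rightarrow> complex mat \<Rightarrow> bool" where
  "psd n A \<longleftrightarrow> hermitian n A \<and>
     (\<forall>x \<in> carrier_vec n. Im (cinner x (A *\<^sub>v x)) = 0 \<and> Re (cinner x (A *\<^sub>v x)) \<ge> 0)"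

definition density :: "nat \<Rightarrow> complex mat \<Rightarrow> bool" where
  "density n \<rho> \<longleftrightarrow> psd n \<rho> \<and> mtrace \<rho> = 1"

definition unitary :: "nat \<Rightarrow> complex mat \<Rightarrow> bool" where
  "unitary n U \<longleftrightarrow> U \<in> carrier_mat n n \<and> U * adj U = 1\<^sub>m n \<and> adj U * U = 1\<^sub>m n"

definition diag_of :: "nat \<Rightarrow> (nat \<Rightarrow> real) \<Rightarrow> complex mat" where
  "diag_of n d = mat n n (\<lambda>(i,j). if i = j then complex_of_real (d i) else 0)"

definition spectral_decomp :: "nat \<Rightarrow> complex mat \<Rightarrow> complex mat \<Rightarrow> (nat \<Rightarrow> real) \<Rightarrow> bool" where
  "spectral_decomp n A U d \<longleftrightarrow> unitary n U \<and> A = U * diag_of n d * adj U"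

definition mat_fun :: "(real \<Rightarrow> real) \<Rightarrow> complex mat \<Rightarrow> complex mat" where
  "mat_fun f A = (SOME M. \<exists>U d. spectral_decomp (dim_row A) A U d \<and>
                              M = U * diag_of (dim_row A) (\<lambda>i. f (d i)) * adj U)"

text \<open>Logarithm taken on the support (eigenvalue 0 is mapped to 0).\<close>
definition ln_supp :: "real \<Rightarrow> real" where
  "ln_supp x = (if x > 0 then ln x else 0)"

definition mat_ln :: "complex mat \<Rightarrow> complex mat" where
  "mat_ln A = mat_fun ln_supp A"

definition vn_entropy :: "complex mat \<Rightarrow> real" where
  "vn_entropy \<rho> = - Re (mtrace (\<rho> * mat_ln \<rho>))"

text \<open>Quantum cross entropy C(rho1, rho2) = - Tr[rho1 ln rho2], ln taken on the support
  of rho2 (this is the finite value; used only where supp rho1 is contained in supp rho2).\<close>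
definition cross_entropy :: "complex mat \<Rightarrow> complex mat \<Rightarrow> real" where
  "cross_entropy \<rho>1 \<rho>2 = - Re (mtrace (\<rho>1 * mat_ln \<rho>2))"

definition ketbra :: "complex vec \<Rightarrow> complex mat" where
  "ketbra v = mat (dim_vec v) (dim_vec v) (\<lambda>(i,j). v $ i * cnj (v $ j))"

definition linear_map :: "nat \<Rightarrow> nat \<Rightarrow> (complex mat \<Rightarrow> complex mat) \<Rightarrow> bool" where
  "linear_map n m \<Phi> \<longleftrightarrow>
     (\<forall>A \<in> carrier_mat n n. \<Phi> A \<in> carrier_mat m m) \<and>
     (\<forall>A \<in> carrier_mat n n. \<forall>B \<in> carrier_mat n n. \<Phi> (A + B) = \<Phi> A + \<Phi> B) \<and>
     (\<forall>c. \<forall>A \<in> carrier_mat n n. \<Phi> (c \<cdot>\<^sub>m A) = c \<cdot>\<^sub>m \<Phi> A)"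

definition trace_preserving :: "nat \<Rightarrow> (complex mat \<Rightarrow> complex mat) \<Rightarrow> bool" where
  "trace_preserving n \<Phi> \<longleftrightarrow> (\<forall>A \<in> carrier_mat n n. mtrace (\<Phi> A) = mtrace A)"

text \<open>(a,b)-th n x n block of a (k n) x (k n) matrix, i.e. an operator on C^k (x) C^n.\<close>
definition block :: "nat \<Rightarrow> complex mat \<Rightarrow> nat \<Rightarrow> nat \<Rightarrow> complex mat" where
  "block n X a b = mat n n (\<lambda>(i,j). X $$ (a * n + i, b * n + j))"

text \<open>id_k (x) Phi applied to X, acting blockwise.\<close>
definition ampliate :: "nat \<Rightarrow> nat \<Rightarrow> nat \<Rightarrow> (complex mat \<Rightarrow> complex mat) \<Rightarrow> complex mat \<Rightarrow> complex mat" where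
  "ampliate k n m \<Phi> X = mat (k * m) (k * m)
     (\<lambda>(i,j). \<Phi> (block n X (i div m) (j div m)) $$ (i mod m, j mod m))"

definition completely_positive :: "nat \<Rightarrow> nat \<Rightarrow> (complex mat \<Rightarrow> complex mat) \<Rightarrow> bool" where
  "completely_positive n m \<Phi> \<longleftrightarrow>
     (\<forall>k. \<forall>X. psd (k * n) X \<longrightarrow> psd (k * m) (ampliate k n m \<Phi> X))"

definition quantum_channel :: "nat \<Rightarrow> nat \<Rightarrow> (complex mat \<Rightarrow> complex mat) \<Rightarrow> bool" where
  "quantum_channel n m \<Phi> \<longleftrightarrow>
     linear_map n m \<Phi> \<and> trace_preserving n \<Phi> \<and> completely_positive n m \<Phi>"

end

(* The v_i are eigenvectors of rho_in = sum_i p_i |v_i><v_i| with eigenvalues p_i, so ln rho_in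
   acts on them as ln p_i and S(rho_in) = - sum_i p_i ln p_i.  As Phi and the trace are linear,
   S(rho_out) = C(rho_out, rho_out) = sum_i p_i C_i with C_i = C(Phi(|v_i><v_i|), rho_out).  Hence
   Delta S = sum_i p_i sigma_i is the mean of sigma, while p_i e^(-sigma_i) = e^(-C_i) gives the
   mean of e^(-sigma); Jensen's inequality e^(-<sigma>) <= <e^(-sigma)> yields Delta S >= L_otm.
   Matrix logarithms are defined through spectral decompositions, which exist by the spectral
   theorem for Hermitian matrices: deflate along an eigenvector completed to an orthonormal basis. *)

theory Submission
  imports Defs "Jordan_Normal_Form.Schur_Decomposition"
begin

lemma index_mult_mat_sum:
  assumes "A \<in> carrier_mat a b" "B \<in> carrier_mat b c" "i < a" "j < c"
  shows "(A * B) $$ (i,j) = (\<Sum>k<b. A $$ (i,k) * B $$ (k,j))"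
  using assms by (auto simp: scalar_prod_def atLeast0LessThan intro!: sum.cong)

lemma index_mult_mat_vec_sum:
  assumes "A \<in> carrier_mat a b" "x \<in> carrier_vec b" "i < a"
  shows "(A *\<^sub>v x) $ i = (\<Sum>k<b. A $$ (i,k) * x $ k)"
  using assms by (auto simp: scalar_prod_def atLeast0LessThan intro!: sum.cong)

lemma mtrace_mult:
  assumes "A \<in> carrier_mat a b" "B \<in> carrier_mat b a"
  shows "mtrace (A * B) = (\<Sum>i<a. \<Sum>k<b. A $$ (i,k) * B $$ (k,i))"
  unfolding mtrace_def using assms
  by (auto intro!: sum.cong simp: index_mult_mat_sum[OF assms] simp del: index_mult_mat(1))

lemma cinner_smult_right:
  assumes "y \<in> carrier_vec (dim_vec x)"
  shows "cinner x (c \<cdot>\<^sub>v y) = c * cinner x y"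
  using assms by (simp add: cinner_def sum_distrib_left mult_ac)

lemma cinner_self: "cinner x x = complex_of_real (\<Sum>k<dim_vec x. (cmod (x $ k))\<^sup>2)"
  unfolding cinner_def of_real_sum by (intro sum.cong refl) (metis complex_norm_square mult.commute)

lemma adj_carrier [simp]: "A \<in> carrier_mat a b \<Longrightarrow> adj A \<in> carrier_mat b a"
  by (auto simp: adj_def)

lemma dim_adj [simp]: "dim_row (adj A) = dim_col A" "dim_col (adj A) = dim_row A"
  by (auto simp: adj_def)

lemma index_adj [simp]: "i < dim_col A \<Longrightarrow> j < dim_row A \<Longrightarrow> adj A $$ (i,j) = cnj (A $$ (j,i))"
  by (auto simp: adj_def)

lemma adj_adj [simp]: "adj (adj A) = A"
  by (rule eq_matI) auto

lemma index_adj_mult: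
  assumes "A \<in> carrier_mat k a" "B \<in> carrier_mat k b" "i < a" "j < b"
  shows "(adj A * B) $$ (i,j) = (\<Sum>l<k. cnj (A $$ (l,i)) * B $$ (l,j))"
  using assms by (simp add: index_mult_mat_sum[of _ a k _ b] del: index_mult_mat(1))

lemma adj_mult:
  assumes "A \<in> carrier_mat a b" "B \<in> carrier_mat b c"
  shows "adj (A * B) = adj B * adj A"
proof (rule eq_matI)
  fix i j assume "i < dim_row (adj B * adj A)" "j < dim_col (adj B * adj A)"
  then have i: "i < c" and j: "j < a" using assms by auto
  have "adj (A * B) $$ (i,j) = (\<Sum>k<b. cnj (A $$ (j,k)) * cnj (B $$ (k,i)))"
    using assms i j by (simp add: index_mult_mat_sum[OF assms j i])
  also have "\<dots> = (adj B * adj A) $$ (i,j)"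
    using assms i j
    by (auto simp: index_mult_mat_sum[of _ c b _ a] simp del: index_mult_mat(1) intro!: sum.cong)
  finally show "adj (A * B) $$ (i, j) = (adj B * adj A) $$ (i, j)" .
qed (use assms in auto)

lemma unitaryI:
  assumes U: "U \<in> carrier_mat n n" and UU: "adj U * U = 1\<^sub>m n"
  shows "unitary n U"
  using U UU mat_mult_left_right_inverse[OF adj_carrier[OF U] U UU] by (simp add: unitary_def)

lemma unitary_mult:
  assumes "unitary n U" "unitary n V"
  shows "unitary n (U * V)"
proof (rule unitaryI)
  have U: "U \<in> carrier_mat n n" and V: "V \<in> carrier_mat n n"
    and UU: "adj U * U = 1\<^sub>m n" and VV: "adj V * V = 1\<^sub>m n"
    using assms by (auto simp: unitary_def)
  show "U * V \<in> carrier_mat n n" using U V by simp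
  have "adj (U * V) * (U * V) = adj V * ((adj U * U) * V)"
    using U V by (simp add: adj_mult[OF U V] assoc_mult_mat[of _ n n _ n _ n])
  then show "adj (U * V) * (U * V) = 1\<^sub>m n" using UU VV V by simp
qed

definition one_dsum :: "nat \<Rightarrow> complex mat \<Rightarrow> complex mat" where
  "one_dsum n U = mat (Suc n) (Suc n)
     (\<lambda>(i,j). if i = 0 \<or> j = 0 then (if i = j then 1 else 0) else U $$ (i - 1, j - 1))"

lemma unitary_one_dsum:
  assumes "unitary n U"
  shows "unitary (Suc n) (one_dsum n U)"
proof (rule unitaryI)
  have U: "U \<in> carrier_mat n n" and UU: "adj U * U = 1\<^sub>m n"
    using assms by (auto simp: unitary_def)
  let ?V = "one_dsum n U"
  show V: "?V \<in> carrier_mat (Suc n) (Suc n)" by (simp add: one_dsum_def)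
  show "adj ?V * ?V = 1\<^sub>m (Suc n)"
  proof (rule eq_matI)
    fix i j assume "i < dim_row (1\<^sub>m (Suc n))" "j < dim_col (1\<^sub>m (Suc n))"
    then have i: "i < Suc n" and j: "j < Suc n" by auto
    have "(adj ?V * ?V) $$ (i,j) = (\<Sum>k<Suc n. cnj (?V $$ (k,i)) * ?V $$ (k,j))"
      by (rule index_adj_mult[OF V V i j])
    also have "\<dots> = cnj (?V $$ (0,i)) * ?V $$ (0,j) + (\<Sum>k<n. cnj (?V $$ (Suc k,i)) * ?V $$ (Suc k,j))"
      by (rule sum.lessThan_Suc_shift)
    also have "\<dots> = 1\<^sub>m (Suc n) $$ (i,j)"
    proof (cases "i = 0 \<or> j = 0")
      case False
      then obtain i' j' where ij: "i = Suc i'" "j = Suc j'" by (cases i; cases j) auto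
      then have i': "i' < n" and j': "j' < n" using i j by auto
      have "(\<Sum>k<n. cnj (?V $$ (Suc k,i)) * ?V $$ (Suc k,j)) = (adj U * U) $$ (i',j')"
        using ij i' j' by (auto simp: index_adj_mult[OF U U i' j'] one_dsum_def intro!: sum.cong)
      then show ?thesis using UU ij i' j' by (simp add: one_dsum_def)
    qed (use i j in \<open>auto simp: one_dsum_def\<close>)
    finally show "(adj ?V * ?V) $$ (i,j) = 1\<^sub>m (Suc n) $$ (i,j)" .
  qed (use V in auto)
qed

lemma unitary_normalize_cols:
  assumes ws: "\<And>j. j < n \<Longrightarrow> ws ! j \<in> carrier_vec n" and orth: "corthogonal ws"
    and len: "length ws = n"
  defines "s j \<equiv> Re (cinner (ws ! j) (ws ! j))"
  shows "unitary n (mat n n (\<lambda>(i,j). ws ! j $ i / complex_of_real (sqrt (s j))))"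
    (is "unitary n ?W")
proof (rule unitaryI)
  have ci: "cinner (ws ! i) (ws ! j) = ws ! j \<bullet>c ws ! i" if "i < n" "j < n" for i j
    using ws that by (auto simp: cinner_def scalar_prod_def atLeast0LessThan mult.commute intro!: sum.cong)
  have cs: "cinner (ws ! j) (ws ! j) = complex_of_real (s j)" and "s j \<ge> 0" for j
    using cinner_self[of "ws ! j"] by (auto simp: s_def intro: sum_nonneg)
  moreover have "s j \<noteq> 0" if "j < n" for j
    using corthogonalD[OF orth, of j j] ci[OF that that] cs[of j] len that by auto
  ultimately have s_pos: "s j > 0" if "j < n" for j
    using that by (simp add: order_le_neq_trans)
  have inner: "cinner (ws ! i) (ws ! j) = (if i = j then complex_of_real (s j) else 0)"
    if "i < n" "j < n" for i j
    using corthogonalD[OF orth, of j i] ci[OF that] cs[of j] len that by auto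
  show W: "?W \<in> carrier_mat n n" by simp
  show "adj ?W * ?W = 1\<^sub>m n"
  proof (rule eq_matI)
    fix i j assume "i < dim_row (1\<^sub>m n)" "j < dim_col (1\<^sub>m n)"
    then have i: "i < n" and j: "j < n" by auto
    have "(adj ?W * ?W) $$ (i,j) = (\<Sum>k<n. cnj (?W $$ (k,i)) * ?W $$ (k,j))"
      by (rule index_adj_mult[OF W W i j])
    also have "\<dots> = cinner (ws ! i) (ws ! j) / (complex_of_real (sqrt (s i)) * complex_of_real (sqrt (s j)))"
      using ws[OF i] i j by (auto simp: cinner_def sum_divide_distrib intro!: sum.cong)
    also have "\<dots> = 1\<^sub>m n $$ (i,j)"
      using inner[OF i j] s_pos[OF j] i j by (simp flip: of_real_mult)
    finally show "(adj ?W * ?W) $$ (i,j) = 1\<^sub>m n $$ (i,j)" .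
  qed (use W in auto)
qed

lemma unitary_with_first_column:
  assumes v: "v \<in> carrier_vec n" and v0: "v \<noteq> 0\<^sub>v n"
  shows "\<exists>W c. unitary n W \<and> col W 0 = c \<cdot>\<^sub>v v"
proof -
  interpret cof_vec_space n "TYPE(complex)" .
  obtain vs where b: "basis_completion v = v # vs"
    unfolding basis_completion_def Let_def by auto
  define ws where "ws = gram_schmidt n (v # vs)"
  from basis_completion[OF v v0, unfolded b]
  have "set (v # vs) \<subseteq> carrier_vec n" "distinct (v # vs)" "\<not> lin_dep (set (v # vs))"
    and len: "length (v # vs) = n" by auto
  from gram_schmidt_result[OF this(1-3) ws_def]
  have ws: "\<And>j. j < n \<Longrightarrow> ws ! j \<in> carrier_vec n" "corthogonal ws" "length ws = n"
    using len by auto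
  have ws0: "ws ! 0 = v"
    using gram_schmidt_hd[OF v, of vs] ws(3) len unfolding ws_def[symmetric] by (cases ws) auto
  let ?s = "\<lambda>j. Re (cinner (ws ! j) (ws ! j))"
  let ?W = "mat n n (\<lambda>(i,j). ws ! j $ i / complex_of_real (sqrt (?s j)))"
  have "col ?W 0 = complex_of_real (1 / sqrt (?s 0)) \<cdot>\<^sub>v v"
    using ws0 v len by (auto simp: divide_inverse mult.commute)
  then show ?thesis using unitary_normalize_cols[OF ws] by blast
qed

subsection \<open>The spectral theorem for Hermitian matrices\<close>

lemma diag_of_eq_mat_diag: "diag_of n d = mat_diag n (\<lambda>i. complex_of_real (d i))"
  by (auto simp: diag_of_def mat_diag_def)

lemma index_mult_diag_of_adj:
  assumes "U \<in> carrier_mat n n" "i < n" "j < n"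
  shows "(U * diag_of n d * adj U) $$ (i,j)
       = (\<Sum>k<n. U $$ (i,k) * complex_of_real (d k) * cnj (U $$ (j,k)))"
  using assms
  by (simp add: diag_of_eq_mat_diag mat_diag_mult_right[of _ n] index_mult_mat_sum[of _ n n _ n]
      del: index_mult_mat(1))

lemma eigenvalue_exists:
  fixes A :: "complex mat"
  assumes A: "A \<in> carrier_mat n n" and n: "0 < n"
  shows "\<exists>e. eigenvalue A e"
proof -
  obtain es where cp: "char_poly A = (\<Prod>a\<leftarrow>es. [:- a, 1:])" and "length es = n"
    using char_poly_factorized[OF A] by blast
  then obtain e es' where "es = e # es'" using n by (cases es) auto
  then have "poly (char_poly A) e = 0" unfolding cp by simp
  then show ?thesis using eigenvalue_root_char_poly[OF A] by blast
qed

lemma hermitian_adj_mult_mult: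
  assumes W: "W \<in> carrier_mat n n" and A: "hermitian n A"
  shows "hermitian n (adj W * A * W)"
proof -
  have A': "A \<in> carrier_mat n n" "adj A = A" using A by (auto simp: hermitian_def)
  have "adj (adj W * A * W) = adj W * adj A * adj (adj W)"
    using W A' by (simp add: adj_mult[of _ n n _ n] assoc_mult_mat[of _ n n _ n _ n])
  then show ?thesis using W A' by (simp add: hermitian_def mult_carrier_mat[of _ n n _ n])
qed

lemma adj_mult_mult_first_column:
  assumes W: "unitary n W" and A: "A \<in> carrier_mat n n"
    and ev: "A *\<^sub>v col W 0 = e \<cdot>\<^sub>v col W 0" and i: "i < n"
  shows "(adj W * A * W) $$ (i,0) = (if i = 0 then e else 0)"
proof -
  have W': "W \<in> carrier_mat n n" "adj W * W = 1\<^sub>m n" using W by (auto simp: unitary_def)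
  have n: "0 < n" using i by simp
  have "(adj W * A * W) $$ (i,0) = (adj W * (A * W)) $$ (i,0)"
    using W' A by (simp add: assoc_mult_mat[of _ n n _ n _ n] del: index_mult_mat(1))
  also have "\<dots> = row (adj W) i \<bullet> col (A * W) 0"
    using W' A i n by (intro index_mult_mat) auto
  also have "col (A * W) 0 = e \<cdot>\<^sub>v col W 0"
    using col_mult2[OF A W'(1) n] ev by simp
  also have "row (adj W) i \<bullet> (e \<cdot>\<^sub>v col W 0) = e * (row (adj W) i \<bullet> col W 0)"
    using W' by simp
  also have "row (adj W) i \<bullet> col W 0 = (adj W * W) $$ (i,0)"
    using W'(1) i n by simp
  finally show ?thesis using W'(2) i n by simp
qed

lemma hermitian_index:
  assumes "hermitian n A" "i < n" "j < n"
  shows "A $$ (i,j) = cnj (A $$ (j,i))"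
proof -
  have "A \<in> carrier_mat n n" "adj A = A" using assms(1) by (auto simp: hermitian_def)
  then show ?thesis using index_adj[of i A j] assms(2,3) by simp
qed

lemma hermitian_lower_block:
  assumes "hermitian (Suc n) B"
  shows "hermitian n (mat n n (\<lambda>(i,j). B $$ (Suc i, Suc j)))"
  unfolding hermitian_def
proof
  show "adj (mat n n (\<lambda>(i,j). B $$ (Suc i, Suc j))) = mat n n (\<lambda>(i,j). B $$ (Suc i, Suc j))"
  proof (rule eq_matI)
    fix i j assume "i < dim_row (mat n n (\<lambda>(i,j). B $$ (Suc i, Suc j)))"
      "j < dim_col (mat n n (\<lambda>(i,j). B $$ (Suc i, Suc j)))"
    then show "adj (mat n n (\<lambda>(i,j). B $$ (Suc i, Suc j))) $$ (i,j)
        = mat n n (\<lambda>(i,j). B $$ (Suc i, Suc j)) $$ (i,j)"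
      using hermitian_index[OF assms, of "Suc i" "Suc j"] by simp
  qed auto
qed simp

lemma hermitian_first_row:
  assumes B: "hermitian n B" and col0: "\<And>i. i < n \<Longrightarrow> B $$ (i,0) = (if i = 0 then e else 0)"
    and j: "j < n"
  shows "B $$ (0,j) = (if j = 0 then complex_of_real (Re e) else 0)"
proof -
  have B00: "B $$ (0,0) = e" using col0[of 0] j by simp
  then have "e = cnj e" using hermitian_index[OF B, of 0 0] j by (metis gr_zeroI less_zeroE)
  from arg_cong[where f = Im, OF this] have "complex_of_real (Re e) = e" by (simp add: complex_eq_iff)
  then show ?thesis using hermitian_index[OF B, of 0 j] col0[of j] B00 j by (cases "j = 0") simp_all
qed

lemma spectral_decomp_one_dsum:
  assumes B: "hermitian (Suc n) B"
    and col0: "\<And>i. i < Suc n \<Longrightarrow> B $$ (i,0) = (if i = 0 then e else 0)"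
    and dec: "spectral_decomp n (mat n n (\<lambda>(i,j). B $$ (Suc i, Suc j))) U d"
  shows "spectral_decomp (Suc n) B (one_dsum n U) (case_nat (Re e) d)"
proof -
  have Bc: "B \<in> carrier_mat (Suc n) (Suc n)" using B by (simp add: hermitian_def)
  have U: "unitary n U" and U_dec: "mat n n (\<lambda>(i,j). B $$ (Suc i, Suc j)) = U * diag_of n d * adj U"
    using dec by (auto simp: spectral_decomp_def)
  have Uc: "U \<in> carrier_mat n n" using U by (simp add: unitary_def)
  note row0 = hermitian_first_row[OF B col0]
  have e: "complex_of_real (Re e) = e" using row0[of 0] col0[of 0] by simp
  let ?V = "one_dsum n U" and ?d = "case_nat (Re e) d"
  have V: "?V \<in> carrier_mat (Suc n) (Suc n)" by (simp add: one_dsum_def)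
  have "B = ?V * diag_of (Suc n) ?d * adj ?V"
  proof (rule eq_matI)
    fix i j assume "i < dim_row (?V * diag_of (Suc n) ?d * adj ?V)" "j < dim_col (?V * diag_of (Suc n) ?d * adj ?V)"
    then have i: "i < Suc n" and j: "j < Suc n" using V by auto
    have "(?V * diag_of (Suc n) ?d * adj ?V) $$ (i,j)
        = (\<Sum>k<Suc n. ?V $$ (i,k) * complex_of_real (?d k) * cnj (?V $$ (j,k)))"
      by (rule index_mult_diag_of_adj[OF V i j])
    also have "\<dots> = ?V $$ (i,0) * complex_of_real (Re e) * cnj (?V $$ (j,0))
          + (\<Sum>k<n. ?V $$ (i,Suc k) * complex_of_real (d k) * cnj (?V $$ (j,Suc k)))"
      by (simp only: sum.lessThan_Suc_shift nat.case)
    also have "\<dots> = B $$ (i,j)"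
    proof (cases "i = 0 \<or> j = 0")
      case False
      then obtain i' j' where ij: "i = Suc i'" "j = Suc j'" by (cases i; cases j) auto
      then have i': "i' < n" and j': "j' < n" using i j by auto
      have "(\<Sum>k<n. ?V $$ (i,Suc k) * complex_of_real (d k) * cnj (?V $$ (j,Suc k)))
          = (U * diag_of n d * adj U) $$ (i',j')"
        using ij i' j' by (auto simp: index_mult_diag_of_adj[OF Uc i' j'] one_dsum_def intro!: sum.cong)
      also have "\<dots> = B $$ (i,j)" using ij i' j' by (simp flip: U_dec)
      finally show ?thesis using ij i' j' by (simp add: one_dsum_def)
    qed (use i j col0 row0 e in \<open>auto simp: one_dsum_def\<close>)
    finally show "B $$ (i,j) = (?V * diag_of (Suc n) ?d * adj ?V) $$ (i,j)" by simp
  qed (use Bc V in \<open>auto simp: diag_of_def\<close>)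
  then show ?thesis using unitary_one_dsum[OF U] by (simp add: spectral_decomp_def)
qed

lemma spectral_decomp_unitary_conj:
  assumes W: "unitary n W" and A: "A \<in> carrier_mat n n"
    and dec: "spectral_decomp n (adj W * A * W) V d"
  shows "spectral_decomp n A (W * V) d"
proof -
  have Wc: "W \<in> carrier_mat n n" and WW: "W * adj W = 1\<^sub>m n" and WW': "adj W * W = 1\<^sub>m n"
    using W by (auto simp: unitary_def)
  have V: "unitary n V" and Vc: "V \<in> carrier_mat n n"
    and B: "adj W * A * W = V * diag_of n d * adj V"
    using dec by (auto simp: spectral_decomp_def unitary_def)
  have D: "diag_of n d \<in> carrier_mat n n" by (simp add: diag_of_def)
  note assoc = assoc_mult_mat[of _ n n _ n _ n] mult_carrier_mat[of _ n n _ n]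
  have "A = (W * adj W) * A * (W * adj W)" using WW A by simp
  also have "\<dots> = W * (adj W * A * W) * adj W"
    using Wc A by (simp add: assoc)
  also have "\<dots> = (W * V) * diag_of n d * adj (W * V)"
    using Wc Vc D by (simp add: B adj_mult[OF Wc Vc] assoc)
  finally show ?thesis using unitary_mult[OF W V] by (simp add: spectral_decomp_def)
qed

theorem hermitian_spectral_decomp: "hermitian n A \<Longrightarrow> \<exists>U d. spectral_decomp n A U d"
proof (induction n arbitrary: A)
  case 0
  then have "spectral_decomp 0 A (1\<^sub>m 0) (\<lambda>_. 0)"
    by (auto simp: hermitian_def spectral_decomp_def unitary_def diag_of_def)
  then show ?case by blast
next
  case (Suc n)
  then have A: "A \<in> carrier_mat (Suc n) (Suc n)" by (simp add: hermitian_def)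
  obtain e v where v: "v \<in> carrier_vec (Suc n)" "v \<noteq> 0\<^sub>v (Suc n)" and ev: "A *\<^sub>v v = e \<cdot>\<^sub>v v"
    using eigenvalue_exists[OF A] A unfolding eigenvalue_def eigenvector_def by auto
  obtain W c where W: "unitary (Suc n) W" and Wv: "col W 0 = c \<cdot>\<^sub>v v"
    using unitary_with_first_column[OF v] by blast
  have "A *\<^sub>v col W 0 = e \<cdot>\<^sub>v col W 0"
    using A v by (simp add: Wv mult_mat_vec ev smult_smult_assoc mult.commute)
  note col0 = adj_mult_mult_first_column[OF W A this]
  have B: "hermitian (Suc n) (adj W * A * W)"
    using W Suc.prems by (simp add: hermitian_adj_mult_mult unitary_def)
  obtain U d where "spectral_decomp n (mat n n (\<lambda>(i,j). (adj W * A * W) $$ (Suc i, Suc j))) U d"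
    using Suc.IH[OF hermitian_lower_block[OF B]] by blast
  from spectral_decomp_one_dsum[OF B col0 this]
  show ?case using spectral_decomp_unitary_conj[OF W A] by blast
qed

lemma mat_fun_spectral:
  assumes "hermitian n A"
  obtains U d where "spectral_decomp n A U d"
    and "mat_fun f A = U * diag_of n (\<lambda>i. f (d i)) * adj U"
proof -
  have n: "dim_row A = n" using assms by (auto simp: hermitian_def)
  have "\<exists>M U d. spectral_decomp n A U d \<and> M = U * diag_of n (\<lambda>i. f (d i)) * adj U"
    using hermitian_spectral_decomp[OF assms] by blast
  from someI_ex[OF this] show ?thesis
    using that unfolding mat_fun_def n by blast
qed

lemma mat_fun_carrier:
  assumes "hermitian n A"
  shows "mat_fun f A \<in> carrier_mat n n"
proof -
  obtain U d where "spectral_decomp n A U d" "mat_fun f A = U * diag_of n (\<lambda>i. f (d i)) * adj U"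
    using mat_fun_spectral[OF assms] .
  then show ?thesis by (auto simp: spectral_decomp_def unitary_def diag_of_def)
qed

lemma diag_of_mult_vec:
  assumes w: "w \<in> carrier_vec n"
  shows "diag_of n d *\<^sub>v w = vec n (\<lambda>k. complex_of_real (d k) * w $ k)"
proof (rule eq_vecI)
  fix k assume "k < dim_vec (vec n (\<lambda>k. complex_of_real (d k) * w $ k))"
  then have k: "k < n" by simp
  have "(diag_of n d *\<^sub>v w) $ k = (\<Sum>l<n. (if k = l then complex_of_real (d k) else 0) * w $ l)"
    using w k by (auto simp: index_mult_mat_vec_sum[of _ n n] diag_of_def simp del: index_mult_mat_vec
        intro!: sum.cong)
  also have "\<dots> = (\<Sum>l<n. if l = k then complex_of_real (d k) * w $ k else 0)"
    by (rule sum.cong) auto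
  finally show "(diag_of n d *\<^sub>v w) $ k = vec n (\<lambda>k. complex_of_real (d k) * w $ k) $ k"
    using k by simp
qed (simp add: diag_of_def)

text \<open>An eigenvector of \<open>A\<close> can only have nonzero coordinates, in the eigenbasis \<open>U\<close>,
  along eigenvalues equal to \<open>q\<close>; hence it is an eigenvector of \<open>f(A)\<close> for \<open>f q\<close>.\<close>
lemma spectral_decomp_eigenvector:
  assumes dec: "spectral_decomp n A U d" and x: "x \<in> carrier_vec n"
    and ev: "A *\<^sub>v x = complex_of_real q \<cdot>\<^sub>v x"
  shows "(U * diag_of n (\<lambda>i. f (d i)) * adj U) *\<^sub>v x = complex_of_real (f q) \<cdot>\<^sub>v x"
proof -
  have U: "U \<in> carrier_mat n n" and UU: "adj U * U = 1\<^sub>m n" and UU': "U * adj U = 1\<^sub>m n"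
    and A: "A = U * diag_of n d * adj U"
    using dec by (auto simp: spectral_decomp_def unitary_def)
  define w where "w = adj U *\<^sub>v x"
  have w: "w \<in> carrier_vec n" using mult_mat_vec_carrier[OF adj_carrier[OF U] x] by (simp add: w_def)
  have D: "diag_of n g \<in> carrier_mat n n" for g by (simp add: diag_of_def)
  have conj: "(U * diag_of n g * adj U) *\<^sub>v x = U *\<^sub>v (diag_of n g *\<^sub>v w)" for g
    using assoc_mult_mat_vec[OF mult_carrier_mat[OF U D] adj_carrier[OF U] x]
      assoc_mult_mat_vec[OF U D w] by (simp add: w_def)
  have cancel: "adj U *\<^sub>v (U *\<^sub>v y) = y" if "y \<in> carrier_vec n" for y
    using assoc_mult_mat_vec[OF adj_carrier[OF U] U that] UU that by simp
  have "diag_of n d *\<^sub>v w = adj U *\<^sub>v (A *\<^sub>v x)"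
    using cancel[OF mult_mat_vec_carrier[OF D w]] by (simp add: A conj)
  also have "\<dots> = complex_of_real q \<cdot>\<^sub>v w"
    using mult_mat_vec[OF adj_carrier[OF U] x] by (simp add: ev w_def)
  finally have eq: "diag_of n d *\<^sub>v w = complex_of_real q \<cdot>\<^sub>v w" .
  have "diag_of n (\<lambda>i. f (d i)) *\<^sub>v w = complex_of_real (f q) \<cdot>\<^sub>v w"
  proof (rule eq_vecI)
    fix k assume "k < dim_vec (complex_of_real (f q) \<cdot>\<^sub>v w)"
    then have k: "k < n" using w by simp
    have "complex_of_real (d k) * w $ k = complex_of_real q * w $ k"
      using arg_cong[OF eq, of "\<lambda>y. y $ k"] w k by (simp add: diag_of_mult_vec)
    then have "w $ k = 0 \<or> d k = q" by simp
    then show "(diag_of n (\<lambda>i. f (d i)) *\<^sub>v w) $ k = (complex_of_real (f q) \<cdot>\<^sub>v w) $ k"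
      using w k by (auto simp: diag_of_mult_vec)
  qed (use w in \<open>simp add: diag_of_mult_vec\<close>)
  moreover have "U *\<^sub>v w = x"
    using assoc_mult_mat_vec[OF U adj_carrier[OF U] x] UU' x by (simp add: w_def)
  ultimately show ?thesis
    using U w by (simp add: conj mult_mat_vec)
qed

lemma mat_fun_eigenvector:
  assumes "hermitian n A" "x \<in> carrier_vec n" "A *\<^sub>v x = complex_of_real q \<cdot>\<^sub>v x"
  shows "mat_fun f A *\<^sub>v x = complex_of_real (f q) \<cdot>\<^sub>v x"
proof -
  obtain U d where "spectral_decomp n A U d" "mat_fun f A = U * diag_of n (\<lambda>i. f (d i)) * adj U"
    using mat_fun_spectral[OF assms(1)] .
  then show ?thesis using spectral_decomp_eigenvector assms(2,3) by metis
qed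

subsection \<open>Mixtures of pure states\<close>

definition mixture :: "nat \<Rightarrow> nat \<Rightarrow> (nat \<Rightarrow> real) \<Rightarrow> (nat \<Rightarrow> complex vec) \<Rightarrow> complex mat" where
  "mixture n r p v = mat n n (\<lambda>(a,b). \<Sum>i<r. complex_of_real (p i) * (v i $ a) * cnj (v i $ b))"

lemma mixture_mult_vec:
  assumes v: "\<forall>i<r. v i \<in> carrier_vec n" and x: "x \<in> carrier_vec n" and a: "a < n"
  shows "(mixture n r p v *\<^sub>v x) $ a = (\<Sum>i<r. complex_of_real (p i) * v i $ a * cinner (v i) x)"
proof -
  have "(mixture n r p v *\<^sub>v x) $ a
      = (\<Sum>b<n. (\<Sum>i<r. complex_of_real (p i) * (v i $ a) * cnj (v i $ b)) * x $ b)"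
    using x a by (simp add: index_mult_mat_vec_sum[of _ n n] mixture_def del: index_mult_mat_vec)
  also have "\<dots> = (\<Sum>i<r. \<Sum>b<n. complex_of_real (p i) * (v i $ a) * (cnj (v i $ b) * x $ b))"
    by (simp add: sum_distrib_right sum.swap[of _ "{..<n}"] mult.assoc)
  also have "\<dots> = (\<Sum>i<r. complex_of_real (p i) * v i $ a * cinner (v i) x)"
    using v by (auto simp: cinner_def sum_distrib_left intro!: sum.cong)
  finally show ?thesis .
qed

lemma mixture_eigenvector:
  assumes v: "\<forall>i<r. v i \<in> carrier_vec n"
    and orth: "\<forall>i<r. \<forall>j<r. cinner (v i) (v j) = (if i = j then 1 else 0)" and j: "j < r"
  shows "mixture n r p v *\<^sub>v v j = complex_of_real (p j) \<cdot>\<^sub>v v j"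
proof -
  have vj: "v j \<in> carrier_vec n" using v j by simp
  note dim = carrier_vecD[OF vj]
  show ?thesis
  proof (rule eq_vecI)
    fix a assume "a < dim_vec (complex_of_real (p j) \<cdot>\<^sub>v v j)"
    then have a: "a < n" using dim by simp
    have "(mixture n r p v *\<^sub>v v j) $ a = (\<Sum>i<r. if i = j then complex_of_real (p j) * v j $ a else 0)"
      unfolding mixture_mult_vec[OF v vj a] by (rule sum.cong) (use orth j in auto)
    then show "(mixture n r p v *\<^sub>v v j) $ a = (complex_of_real (p j) \<cdot>\<^sub>v v j) $ a"
      using j a dim by simp
  qed (use dim in \<open>simp add: mixture_def\<close>)
qed

lemma psd_mixture:
  assumes v: "\<forall>i<r. v i \<in> carrier_vec n" and p: "\<forall>i<r. 0 \<le> p i"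
  shows "psd n (mixture n r p v)"
  unfolding psd_def hermitian_def
proof (intro conjI ballI)
  let ?\<rho> = "mixture n r p v"
  show "?\<rho> \<in> carrier_mat n n" by (simp add: mixture_def)
  show "adj ?\<rho> = ?\<rho>" by (rule eq_matI) (auto simp: mixture_def mult_ac)
  fix x :: "complex vec" assume x: "x \<in> carrier_vec n"
  have "cinner x (?\<rho> *\<^sub>v x) = (\<Sum>a<n. cnj (x $ a) * (\<Sum>i<r. complex_of_real (p i) * v i $ a * cinner (v i) x))"
    using x by (simp add: cinner_def mixture_mult_vec[OF v x] del: index_mult_mat_vec)
  also have "\<dots> = (\<Sum>i<r. complex_of_real (p i) * cinner (v i) x * (\<Sum>a<n. cnj (x $ a) * v i $ a))"
    by (simp add: sum_distrib_left sum_distrib_right sum.swap[of _ "{..<n}" "{..<r}"] mult_ac)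
  also have "\<dots> = (\<Sum>i<r. complex_of_real (p i * (cmod (cinner (v i) x))\<^sup>2))"
  proof (rule sum.cong[OF refl])
    fix i assume "i \<in> {..<r}"
    then have "dim_vec (v i) = n" using v carrier_vecD by blast
    then have "(\<Sum>a<n. cnj (x $ a) * v i $ a) = cnj (cinner (v i) x)"
      by (simp add: cinner_def mult.commute)
    then show "complex_of_real (p i) * cinner (v i) x * (\<Sum>a<n. cnj (x $ a) * v i $ a)
        = complex_of_real (p i * (cmod (cinner (v i) x))\<^sup>2)"
      by (simp flip: complex_norm_square)
  qed
  finally have "cinner x (?\<rho> *\<^sub>v x) = complex_of_real (\<Sum>i<r. p i * (cmod (cinner (v i) x))\<^sup>2)"
    by simp
  moreover have "(\<Sum>i<r. p i * (cmod (cinner (v i) x))\<^sup>2) \<ge> 0"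
    using p by (intro sum_nonneg) auto
  ultimately show "Im (cinner x (?\<rho> *\<^sub>v x)) = 0" "0 \<le> Re (cinner x (?\<rho> *\<^sub>v x))"
    by simp_all
qed

lemma ketbra_carrier [simp]:
  assumes "v \<in> carrier_vec n"
  shows "ketbra v \<in> carrier_mat n n"
  using carrier_vecD[OF assms] by (simp add: ketbra_def)

lemma mixture_eq_lincomb_ketbra:
  assumes "\<forall>i<r. v i \<in> carrier_vec n"
  shows "mixture n r p v = mat n n (\<lambda>(a,b). \<Sum>i<r. complex_of_real (p i) * ketbra (v i) $$ (a,b))"
proof -
  have "\<And>i. i < r \<Longrightarrow> dim_vec (v i) = n" using assms carrier_vecD by blast
  then show ?thesis by (intro eq_matI) (auto simp: mixture_def ketbra_def mult.assoc intro!: sum.cong)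
qed

lemma mtrace_lincomb_mult:
  assumes A: "\<forall>i<r. A i \<in> carrier_mat m m" and M: "M \<in> carrier_mat m m"
  shows "mtrace (mat m m (\<lambda>(a,b). \<Sum>i<r. c i * A i $$ (a,b)) * M) = (\<Sum>i<r. c i * mtrace (A i * M))"
proof -
  have X: "mat m m (\<lambda>(a,b). \<Sum>i<r. c i * A i $$ (a,b)) \<in> carrier_mat m m" by simp
  have "mtrace (mat m m (\<lambda>(a,b). \<Sum>i<r. c i * A i $$ (a,b)) * M)
      = (\<Sum>a<m. \<Sum>b<m. \<Sum>i<r. c i * (A i $$ (a,b) * M $$ (b,a)))"
    by (simp add: mtrace_mult[OF X M] sum_distrib_right mult.assoc)
  also have "\<dots> = (\<Sum>a<m. \<Sum>i<r. \<Sum>b<m. c i * (A i $$ (a,b) * M $$ (b,a)))"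
    by (rule sum.cong[OF refl], rule sum.swap)
  also have "\<dots> = (\<Sum>i<r. \<Sum>a<m. \<Sum>b<m. c i * (A i $$ (a,b) * M $$ (b,a)))"
    by (rule sum.swap)
  also have "\<dots> = (\<Sum>i<r. c i * mtrace (A i * M))"
    using A by (auto simp: mtrace_mult[OF _ M] sum_distrib_left intro!: sum.cong)
  finally show ?thesis .
qed

lemma mtrace_ketbra_mult:
  assumes v: "v \<in> carrier_vec n" and L: "L \<in> carrier_mat n n"
  shows "mtrace (ketbra v * L) = cinner v (L *\<^sub>v v)"
proof -
  have K: "ketbra v \<in> carrier_mat n n" using v by simp
  have "mtrace (ketbra v * L) = (\<Sum>a<n. \<Sum>b<n. v $ a * cnj (v $ b) * L $$ (b,a))"
    unfolding mtrace_mult[OF K L] using carrier_vecD[OF v] by (simp add: ketbra_def)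
  also have "\<dots> = (\<Sum>b<n. \<Sum>a<n. cnj (v $ b) * (L $$ (b,a) * v $ a))"
    by (subst sum.swap) (simp add: mult_ac)
  also have "\<dots> = cinner v (L *\<^sub>v v)"
    using v L by (simp add: cinner_def index_mult_mat_vec_sum[OF L v] sum_distrib_left
        del: index_mult_mat_vec)
  finally show ?thesis .
qed

lemma mtrace_mixture_mult:
  assumes v: "\<forall>i<r. v i \<in> carrier_vec n" and L: "L \<in> carrier_mat n n"
  shows "mtrace (mixture n r p v * L) = (\<Sum>i<r. complex_of_real (p i) * cinner (v i) (L *\<^sub>v v i))"
proof -
  have "\<forall>i<r. ketbra (v i) \<in> carrier_mat n n" using v by simp
  from mtrace_lincomb_mult[OF this L] show ?thesis
    using v by (auto simp: mixture_eq_lincomb_ketbra[OF v] mtrace_ketbra_mult[OF _ L] intro!: sum.cong)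
qed

subsection \<open>Channels and entropies\<close>

lemma linear_map_lincomb:
  fixes A :: "nat \<Rightarrow> complex mat"
  assumes lin: "Defs.linear_map n m \<Phi>" and A: "\<forall>i<k. A i \<in> carrier_mat n n"
  shows "\<Phi> (mat n n (\<lambda>(a,b). \<Sum>i<k. c i * A i $$ (a,b)))
       = mat m m (\<lambda>(a,b). \<Sum>i<k. c i * \<Phi> (A i) $$ (a,b))"
  using A
proof (induction k)
  case 0
  have hom: "\<Phi> (0 \<cdot>\<^sub>m 0\<^sub>m n n) = 0 \<cdot>\<^sub>m \<Phi> (0\<^sub>m n n)" and Z: "\<Phi> (0\<^sub>m n n) \<in> carrier_mat m m"
    using lin zero_carrier_mat[of n n] unfolding Defs.linear_map_def by blast+
  have "\<Phi> (mat n n (\<lambda>(a,b). \<Sum>i<0. c i * A i $$ (a,b))) = \<Phi> (0 \<cdot>\<^sub>m 0\<^sub>m n n)"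
    by (rule arg_cong[where f = \<Phi>]) (rule eq_matI, auto)
  also have "\<dots> = mat m m (\<lambda>(a,b). \<Sum>i<0. c i * \<Phi> (A i) $$ (a,b))"
    unfolding hom using Z by (intro eq_matI) auto
  finally show ?case .
next
  case (Suc k)
  define X where "X = mat n n (\<lambda>(a,b). \<Sum>i<k. c i * A i $$ (a,b))"
  have X: "X \<in> carrier_mat n n" by (simp add: X_def)
  have Ak: "A k \<in> carrier_mat n n" using Suc.prems by simp
  have \<Phi>A: "\<Phi> (A k) \<in> carrier_mat m m" using lin Ak by (simp add: Defs.linear_map_def)
  have IH: "\<Phi> X = mat m m (\<lambda>(a,b). \<Sum>i<k. c i * \<Phi> (A i) $$ (a,b))"
    unfolding X_def by (rule Suc.IH) (use Suc.prems in simp)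
  have "mat n n (\<lambda>(a,b). \<Sum>i<Suc k. c i * A i $$ (a,b)) = X + c k \<cdot>\<^sub>m A k"
    by (rule eq_matI) (use Ak in \<open>auto simp: X_def\<close>)
  then have "\<Phi> (mat n n (\<lambda>(a,b). \<Sum>i<Suc k. c i * A i $$ (a,b))) = \<Phi> X + c k \<cdot>\<^sub>m \<Phi> (A k)"
    using lin X Ak by (simp add: Defs.linear_map_def)
  also have "\<dots> = mat m m (\<lambda>(a,b). \<Sum>i<Suc k. c i * \<Phi> (A i) $$ (a,b))"
    unfolding IH by (rule eq_matI) (use \<Phi>A in auto)
  finally show ?case .
qed

lemma completely_positive_psd:
  assumes lin: "Defs.linear_map n m \<Phi>" and cp: "completely_positive n m \<Phi>" and X: "psd n X"
  shows "psd m (\<Phi> X)"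
proof -
  have Xc: "X \<in> carrier_mat n n" using X by (simp add: psd_def hermitian_def)
  have blk: "block n X 0 0 = X" using Xc by (auto simp: block_def)
  have "ampliate 1 n m \<Phi> X = \<Phi> X"
    by (rule eq_matI) (use lin Xc blk in \<open>auto simp: ampliate_def Defs.linear_map_def\<close>)
  moreover have "psd (1 * m) (ampliate 1 n m \<Phi> X)"
    using cp X unfolding completely_positive_def by (metis mult_1)
  ultimately show ?thesis by simp
qed

lemma cross_entropy_lincomb:
  assumes A: "\<forall>i<r. A i \<in> carrier_mat m m" and \<sigma>: "hermitian m \<sigma>"
  shows "cross_entropy (mat m m (\<lambda>(a,b). \<Sum>i<r. complex_of_real (p i) * A i $$ (a,b))) \<sigma>
       = (\<Sum>i<r. p i * cross_entropy (A i) \<sigma>)"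
  using mtrace_lincomb_mult[OF A mat_fun_carrier[OF \<sigma>, of ln_supp]]
  by (simp add: cross_entropy_def mat_ln_def sum_negf)

lemma vn_entropy_mixture:
  assumes v: "\<forall>i<r. v i \<in> carrier_vec n"
    and orth: "\<forall>i<r. \<forall>j<r. cinner (v i) (v j) = (if i = j then 1 else 0)"
    and p: "\<forall>i<r. 0 < p i"
  shows "vn_entropy (mixture n r p v) = - (\<Sum>i<r. p i * ln (p i))"
proof -
  let ?\<rho> = "mixture n r p v"
  have herm: "hermitian n ?\<rho>"
    using psd_mixture[OF v] p by (simp add: psd_def less_imp_le)
  have L: "mat_ln ?\<rho> \<in> carrier_mat n n"
    unfolding mat_ln_def by (rule mat_fun_carrier[OF herm])
  have "mtrace (?\<rho> * mat_ln ?\<rho>) = (\<Sum>i<r. complex_of_real (p i) * cinner (v i) (mat_ln ?\<rho> *\<^sub>v v i))"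
    by (rule mtrace_mixture_mult[OF v L])
  also have "\<dots> = (\<Sum>i<r. complex_of_real (p i * ln (p i)))"
  proof (rule sum.cong[OF refl])
    fix i assume "i \<in> {..<r}"
    then have i: "i < r" by simp
    have "mat_ln ?\<rho> *\<^sub>v v i = complex_of_real (ln (p i)) \<cdot>\<^sub>v v i"
      using mat_fun_eigenvector[OF herm _ mixture_eigenvector[OF v orth i], of ln_supp] v p i
      by (simp add: mat_ln_def ln_supp_def)
    then show "complex_of_real (p i) * cinner (v i) (mat_ln ?\<rho> *\<^sub>v v i) = complex_of_real (p i * ln (p i))"
      using v orth i by (simp add: cinner_smult_right)
  qed
  finally show ?thesis by (simp add: vn_entropy_def sum_negf)
qed

lemma vn_entropy_channel_mixture:
  assumes lin: "Defs.linear_map n m \<Phi>" and cp: "completely_positive n m \<Phi>"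
    and v: "\<forall>i<r. v i \<in> carrier_vec n" and p: "\<forall>i<r. 0 \<le> p i"
  shows "vn_entropy (\<Phi> (mixture n r p v))
       = (\<Sum>i<r. p i * cross_entropy (\<Phi> (ketbra (v i))) (\<Phi> (mixture n r p v)))"
proof -
  let ?\<sigma> = "\<Phi> (mixture n r p v)"
  have herm: "hermitian m ?\<sigma>"
    using completely_positive_psd[OF lin cp psd_mixture[OF v p]] by (simp add: psd_def)
  have K: "\<forall>i<r. ketbra (v i) \<in> carrier_mat n n" using v by simp
  then have \<Phi>K: "\<forall>i<r. \<Phi> (ketbra (v i)) \<in> carrier_mat m m" using lin by (simp add: Defs.linear_map_def)
  have "?\<sigma> = mat m m (\<lambda>(a,b). \<Sum>i<r. complex_of_real (p i) * \<Phi> (ketbra (v i)) $$ (a,b))"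
    unfolding mixture_eq_lincomb_ketbra[OF v] by (rule linear_map_lincomb[OF lin K])
  from cross_entropy_lincomb[OF \<Phi>K herm, of p, folded this] show ?thesis
    by (simp add: vn_entropy_def cross_entropy_def)
qed

lemma mean_le_ln_mean_exp:
  fixes p y :: "nat \<Rightarrow> real"
  assumes p: "\<forall>i<r. 0 \<le> p i" and p_sum: "(\<Sum>i<r. p i) = 1"
  shows "(\<Sum>i<r. p i * y i) \<le> ln (\<Sum>i<r. p i * exp (y i))"
proof -
  define \<mu> where "\<mu> = (\<Sum>i<r. p i * y i)"
  \<comment> \<open>the tangent line of \<open>exp\<close> at \<open>\<mu>\<close> lies below \<open>exp\<close>\<close>
  have "(\<Sum>i<r. p i * (exp \<mu> * (1 + (y i - \<mu>))))
      = exp \<mu> * ((\<Sum>i<r. p i) + (\<Sum>i<r. p i * y i) - \<mu> * (\<Sum>i<r. p i))"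
    by (simp add: sum_distrib_left sum_distrib_right ring_distribs sum.distrib sum_subtractf mult_ac)
  then have "exp \<mu> = (\<Sum>i<r. p i * (exp \<mu> * (1 + (y i - \<mu>))))"
    using p_sum by (simp add: \<mu>_def[symmetric])
  also have "\<dots> \<le> (\<Sum>i<r. p i * exp (y i))"
  proof (rule sum_mono)
    fix i assume "i \<in> {..<r}"
    have "exp \<mu> * (1 + (y i - \<mu>)) \<le> exp \<mu> * exp (y i - \<mu>)"
      by (rule mult_left_mono) simp_all
    then show "p i * (exp \<mu> * (1 + (y i - \<mu>))) \<le> p i * exp (y i)"
      using p \<open>i \<in> {..<r}\<close> by (simp add: exp_diff mult_left_mono)
  qed
  finally have le: "exp \<mu> \<le> (\<Sum>i<r. p i * exp (y i))" .
  have "0 < (\<Sum>i<r. p i * exp (y i))" using order_less_le_trans[OF exp_gt_zero le] .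
  with le show ?thesis unfolding \<mu>_def by (simp add: ln_ge_iff)
qed

theorem theorem1:
  fixes n m r :: nat
    and \<Phi> :: "complex mat \<Rightarrow> complex mat"
    and p :: "nat \<Rightarrow> real"
    and v :: "nat \<Rightarrow> complex vec"
    and \<rho>_in \<rho>_out :: "complex mat"
  assumes channel: "quantum_channel n m \<Phi>"
    and v_dim: "\<forall>i<r. v i \<in> carrier_vec n"
    and v_orthonormal: "\<forall>i<r. \<forall>j<r. cinner (v i) (v j) = (if i = j then 1 else 0)"
    and p_pos: "\<forall>i<r. 0 < p i \<and> p i \<le> 1"
    and p_sum: "(\<Sum>i<r. p i) = 1"
    and rho_in_def: "\<rho>_in = mat n n (\<lambda>(a,b). \<Sum>i<r. complex_of_real (p i) * (v i $ a) * cnj (v i $ b))"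
    and rho_out_def: "\<rho>_out = \<Phi> \<rho>_in"
  shows "(\<Sum>i<r. p i * exp (- (cross_entropy (\<Phi> (ketbra (v i))) \<rho>_out + ln (p i))))
           = (\<Sum>i<r. exp (- cross_entropy (\<Phi> (ketbra (v i))) \<rho>_out))
         \<and> vn_entropy \<rho>_out - vn_entropy \<rho>_in
           \<ge> - ln (\<Sum>i<r. exp (- cross_entropy (\<Phi> (ketbra (v i))) \<rho>_out))"
proof -
  define C where "C i = cross_entropy (\<Phi> (ketbra (v i))) \<rho>_out" for i
  have p: "\<forall>i<r. 0 < p i" using p_pos by blast
  have lin: "Defs.linear_map n m \<Phi>" and cp: "completely_positive n m \<Phi>"
    using channel by (auto simp: quantum_channel_def)
  have \<rho>_in: "\<rho>_in = mixture n r p v" unfolding rho_in_def mixture_def ..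
  have \<Delta>S: "vn_entropy \<rho>_out - vn_entropy \<rho>_in = (\<Sum>i<r. p i * (C i + ln (p i)))"
    using vn_entropy_channel_mixture[OF lin cp v_dim, of p] vn_entropy_mixture[OF v_dim v_orthonormal p] p
    unfolding rho_out_def \<rho>_in C_def by (simp add: sum.distrib ring_distribs less_imp_le)
  have mean: "(\<Sum>i<r. p i * exp (- (C i + ln (p i)))) = (\<Sum>i<r. exp (- C i))"
  proof (rule sum.cong[OF refl])
    fix i assume "i \<in> {..<r}"
    then have "0 < p i" using p by simp
    then show "p i * exp (- (C i + ln (p i))) = exp (- C i)" by (simp add: exp_diff)
  qed
  have "- (vn_entropy \<rho>_out - vn_entropy \<rho>_in) = (\<Sum>i<r. p i * - (C i + ln (p i)))"
    unfolding \<Delta>S sum_negf[symmetric] by (intro sum.cong) (simp_all add: algebra_simps)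
  also have "\<dots> \<le> ln (\<Sum>i<r. p i * exp (- (C i + ln (p i))))"
    by (rule mean_le_ln_mean_exp) (use p p_sum in \<open>auto simp: less_imp_le\<close>)
  finally show ?thesis using mean unfolding C_def by simp
qed

end
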